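(* Let $(\mu_t)_{t\ge 0}$ and $(d_t)$ be sequences of real numbers such that: (i) for every $t$, $\mu_t>d_t$ if and only if $\mu_{t+1}>\mu_t$; (ii) there exists $t_0>0$ such that $|d_{t+1}-d_t|\le|\mu_{t+1}-\mu_t|$ for all $t\ge t_0$; (iii) $\sum_{t=0}^{\infty}|\mu_{t+1}-\mu_t|=\infty$. Then $\mu_t$ degenerates strongly, i.e. $\lim_{t\to\infty}|\mu_t-\mu_0|=\infty$ (equivalently, $\mu_t\to\infty$ or $\mu_t\to-\infty$).
   Context: $\mu_t$ models a user's interest level in an item at time $t$ and $d_t$ an action threshold at time $t$. A real sequence $(\mu_t)$ is said to degenerate strongly if $\lim_{t\to\infty}|\mu_t-\mu_0|=\infty$. *)

theory Defs
  imports Complex_Main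
begin

definition degenerates_strongly :: "(nat \<Rightarrow> real) \<Rightarrow> bool" where
  "degenerates_strongly \<mu> \<longleftrightarrow> filterlim (\<lambda>t. \<bar>\<mu> t - \<mu> 0\<bar>) at_top sequentially"

end

theory Submission
  imports Defs
begin

text \<open>While \<open>\<mu>\<close> lies above the threshold it increases, and the threshold can move by at
  most as much as \<open>\<mu>\<close> does; while \<open>\<mu>\<close> lies at or below it, \<open>\<mu>\<close> does not increase and the
  threshold cannot fall faster than \<open>\<mu>\<close>. So from \<open>t\<^sub>0\<close> on, \<open>\<mu>\<close> stays on one side of \<open>d\<close> and
  is monotone. A monotone sequence whose increments are not summable tends to \<open>\<plusminus>\<infinity>\<close>.\<close>

lemma threshold_side_step:
  fixes \<mu> d :: "nat \<Rightarrow> real"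
  assumes "\<mu> t > d t \<longleftrightarrow> \<mu> (Suc t) > \<mu> t"
    and "\<bar>d (Suc t) - d t\<bar> \<le> \<bar>\<mu> (Suc t) - \<mu> t\<bar>"
  shows "\<mu> (Suc t) > d (Suc t) \<longleftrightarrow> \<mu> t > d t"
  using assms by (auto simp: abs_le_iff not_less)

lemma threshold_side_persists:
  fixes \<mu> d :: "nat \<Rightarrow> real"
  assumes "\<And>t. \<mu> t > d t \<longleftrightarrow> \<mu> (Suc t) > \<mu> t"
    and "\<And>t. t \<ge> t0 \<Longrightarrow> \<bar>d (Suc t) - d t\<bar> \<le> \<bar>\<mu> (Suc t) - \<mu> t\<bar>"
    and "t \<ge> t0"
  shows "\<mu> t > d t \<longleftrightarrow> \<mu> t0 > d t0"
  using \<open>t \<ge> t0\<close>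
proof (induction t rule: dec_induct)
  case (step t)
  then show ?case using threshold_side_step[where t=t] assms(1,2) by blast
qed simp

lemma partial_sums_at_top_if_not_summable:
  fixes f :: "nat \<Rightarrow> real"
  assumes nonneg: "\<And>t. f t \<ge> 0" and "\<not> summable f"
  shows "filterlim (\<lambda>n. \<Sum>t<n. f t) at_top sequentially"
proof (subst filterlim_at_top, intro allI)
  fix Z :: real
  obtain N where N: "(\<Sum>t<N. f t) > Z"
    using summableI_nonneg_bounded[of f Z] nonneg \<open>\<not> summable f\<close> by (meson not_le)
  have "(\<Sum>t<N. f t) \<le> (\<Sum>t<n. f t)" if "n \<ge> N" for n
    using that by (intro sum_mono2) (auto simp: nonneg)
  with N show "eventually (\<lambda>n. Z \<le> (\<Sum>t<n. f t)) sequentially"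
    unfolding eventually_sequentially by (meson less_le_trans less_imp_le)
qed

lemma filterlim_at_top_shift_iff:
  "filterlim (\<lambda>n. f (n + k)) at_top sequentially \<longleftrightarrow> filterlim f at_top sequentially"
  for f :: "nat \<Rightarrow> 'a::linorder"
proof -
  have "eventually (\<lambda>n. Z \<le> f (n + k)) sequentially \<longleftrightarrow> eventually (\<lambda>n. Z \<le> f n) sequentially"
    for Z
    by (rule eventually_sequentially_seg)
  then show ?thesis
    by (simp add: filterlim_at_top)
qed

lemma at_top_if_eventually_incseq_not_summable:
  fixes \<mu> :: "nat \<Rightarrow> real"
  assumes "eventually (\<lambda>t. \<mu> t \<le> \<mu> (Suc t)) sequentially"
    and "\<not> summable (\<lambda>t. \<bar>\<mu> (Suc t) - \<mu> t\<bar>)"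
  shows "filterlim \<mu> at_top sequentially"
proof -
  obtain t0 where mono: "\<And>t. t \<ge> t0 \<Longrightarrow> \<mu> t \<le> \<mu> (Suc t)"
    using assms(1) by (auto simp: eventually_sequentially)
  define g where "g t = \<mu> (Suc t + t0) - \<mu> (t + t0)" for t
  have g_nonneg: "g t \<ge> 0" for t
    using mono[of "t + t0"] by (simp add: g_def)
  have "g = (\<lambda>t. \<bar>\<mu> (Suc (t + t0)) - \<mu> (t + t0)\<bar>)"
    using g_nonneg by (auto simp: g_def)
  then have "\<not> summable g"
    using assms(2) summable_iff_shift[of "\<lambda>t. \<bar>\<mu> (Suc t) - \<mu> t\<bar>" t0] by simp
  then have "filterlim (\<lambda>n. \<mu> t0 + (\<Sum>t<n. g t)) at_top sequentially"
    by (intro filterlim_tendsto_add_at_top[OF tendsto_const]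
        partial_sums_at_top_if_not_summable g_nonneg)
  moreover have "\<mu> t0 + (\<Sum>t<n. g t) = \<mu> (n + t0)" for n
    using sum_lessThan_telescope[of "\<lambda>t. \<mu> (t + t0)" n] by (simp add: g_def)
  ultimately show ?thesis
    by (simp add: filterlim_at_top_shift_iff[of \<mu> t0, symmetric])
qed

lemma degenerates_strongly_if_at_top:
  assumes "filterlim \<mu> at_top sequentially"
  shows "degenerates_strongly \<mu>"
proof -
  have "filterlim (\<lambda>t. - \<mu> 0 + \<mu> t) at_top sequentially"
    using filterlim_tendsto_add_at_top[OF tendsto_const assms] .
  then show ?thesis
    unfolding degenerates_strongly_def
    by (rule filterlim_at_top_mono) (auto intro: always_eventually)
qed

lemma degenerates_strongly_uminus_iff:
  "degenerates_strongly (\<lambda>t. - \<mu> t) \<longleftrightarrow> degenerates_strongly \<mu>"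
  by (simp add: degenerates_strongly_def abs_minus_commute)

theorem theorem4:
  fixes \<mu> d :: "nat \<Rightarrow> real"
  assumes i: "\<And>t. \<mu> t > d t \<longleftrightarrow> \<mu> (t + 1) > \<mu> t"
    and ii: "\<exists>t0 > 0. \<forall>t \<ge> t0. \<bar>d (t + 1) - d t\<bar> \<le> \<bar>\<mu> (t + 1) - \<mu> t\<bar>"
    and iii: "\<not> summable (\<lambda>t. \<bar>\<mu> (t + 1) - \<mu> t\<bar>)"
  shows "degenerates_strongly \<mu>"
proof -
  obtain t0 where step: "\<And>t. t \<ge> t0 \<Longrightarrow> \<bar>d (Suc t) - d t\<bar> \<le> \<bar>\<mu> (Suc t) - \<mu> t\<bar>"
    using ii by auto
  have i': "\<mu> t > d t \<longleftrightarrow> \<mu> (Suc t) > \<mu> t" for t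
    using i by simp
  have side: "\<mu> t > d t \<longleftrightarrow> \<mu> t0 > d t0" if "t \<ge> t0" for t
    using threshold_side_persists[where \<mu>=\<mu> and d=d, OF i' step that] .
  have increments: "\<not> summable (\<lambda>t. \<bar>\<mu> (Suc t) - \<mu> t\<bar>)"
    using iii by simp
  show ?thesis
  proof (cases "\<mu> t0 > d t0")
    case True
    have "\<mu> t \<le> \<mu> (Suc t)" if "t \<ge> t0" for t
      using side[OF that] True i'[of t] by simp
    then have "eventually (\<lambda>t. \<mu> t \<le> \<mu> (Suc t)) sequentially"
      unfolding eventually_sequentially by blast
    then have "filterlim \<mu> at_top sequentially"
      using increments by (rule at_top_if_eventually_incseq_not_summable)
    then show ?thesis
      by (rule degenerates_strongly_if_at_top)
  next
    case False
    have "- \<mu> t \<le> - \<mu> (Suc t)" if "t \<ge> t0" for t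
      using side[OF that] False i'[of t] by simp
    then have "eventually (\<lambda>t. - \<mu> t \<le> - \<mu> (Suc t)) sequentially"
      unfolding eventually_sequentially by blast
    moreover have "\<not> summable (\<lambda>t. \<bar>- \<mu> (Suc t) - - \<mu> t\<bar>)"
      using increments by (simp add: abs_minus_commute)
    ultimately have "filterlim (\<lambda>t. - \<mu> t) at_top sequentially"
      by (rule at_top_if_eventually_incseq_not_summable)
    then have "degenerates_strongly (\<lambda>t. - \<mu> t)"
      by (rule degenerates_strongly_if_at_top)
    then show ?thesis
      by (simp only: degenerates_strongly_uminus_iff)
  qed
qed

end
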